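(* Let $\mathcal{P}=(P_1,\dots,P_n)$ be convex polytopes in $\mathbb{R}^d$ each containing the origin, let $\mu\in\mathbb{R}^d$, and let $\Delta=\Delta(\mathcal{P};\mu)$. Suppose there is a line $\ell$ through $\mu$ that does not intersect $P_\sigma$ for any $\sigma\in\Delta$. Then $\mathrm{ctd}(\Delta)<d$.
   Context: For $\sigma\subseteq[n]$ write $P_\sigma=\sum_{i\in\sigma}P_i$ (Minkowski sum), with $P_\emptyset=\{0\}$; the Minkowski complex $\Delta(\mathcal{P};\mu)$ is the simplicial complex on vertex set $[n]$ whose faces are the $\sigma\subseteq[n]$ with $\mu\notin P_\sigma$. The convex threshold dimension $\mathrm{ctd}(\Delta)$ of a simplicial complex $\Delta$ on vertex set $[n]$ is the smallest $d$ such that $\Delta=\Delta(\mathcal{Q};\nu)$ for some family $\mathcal{Q}=(Q_1,\dots,Q_n)$ of convex bodies (equivalently, convex polytopes) in $\mathbb{R}^d$ containing the origin and some $\nu\in\mathbb{R}^d$. *)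

theory Defs
  imports "HOL-Analysis.Analysis" "HOL-Library.Function_Algebras"
begin

definition msum :: "(nat \<Rightarrow> 'a::comm_monoid_add set) \<Rightarrow> nat set \<Rightarrow> 'a set" where
  "msum P \<sigma> = {(\<Sum>i\<in>\<sigma>. x i) | x. \<forall>i\<in>\<sigma>. x i \<in> P i}"

definition minkowski_complex :: "(nat \<Rightarrow> 'a::comm_monoid_add set) \<Rightarrow> 'a \<Rightarrow> nat \<Rightarrow> nat set set" where
  "minkowski_complex P \<mu> n = {\<sigma>. \<sigma> \<subseteq> {1..n} \<and> \<mu> \<notin> msum P \<sigma>}"

text \<open>Concrete model of R^k: real sequences supported on coordinates 1..k.\<close>
definition Rk :: "nat \<Rightarrow> (nat \<Rightarrow> real) set" where
  "Rk k = {x. \<forall>i. i \<notin> {1..k} \<longrightarrow> x i = 0}"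

definition polytope_Rk :: "nat \<Rightarrow> (nat \<Rightarrow> real) set \<Rightarrow> bool" where
  "polytope_Rk k Q \<longleftrightarrow> (\<exists>V. finite V \<and> V \<subseteq> Rk k \<and>
     Q = {(\<lambda>j. \<Sum>v\<in>V. c v * v j) | c. (\<forall>v\<in>V. 0 \<le> c v) \<and> sum c V = 1})"

definition realizable_in :: "nat set set \<Rightarrow> nat \<Rightarrow> nat \<Rightarrow> bool" where
  "realizable_in \<Delta> n k \<longleftrightarrow> (\<exists>Q \<nu>. \<nu> \<in> Rk k \<and>
     (\<forall>i\<in>{1..n}. polytope_Rk k (Q i) \<and> (0::nat\<Rightarrow>real) \<in> Q i) \<and>
     \<Delta> = minkowski_complex Q \<nu> n)"

definition ctd :: "nat set set \<Rightarrow> nat \<Rightarrow> nat" where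
  "ctd \<Delta> n = (LEAST k. realizable_in \<Delta> n k)"

end

theory Submission
  imports Defs
begin

text \<open>Project \<open>\<real>\<^sup>d\<close> linearly onto \<open>\<real>\<^sup>d\<^sup>-\<^sup>1\<close> with kernel the direction of the line.
  Linear maps commute with Minkowski sums and convex hulls, so the images of the \<open>P i\<close>
  are polytopes containing the origin, and every non-face stays a non-face. A face \<open>\<sigma>\<close>
  stays a face: a point of \<open>P\<^sub>\<sigma>\<close> with the same image as \<open>\<mu>\<close> would lie on the line through \<open>\<mu>\<close>,
  which misses \<open>P\<^sub>\<sigma>\<close>. So the projected family realises the same complex in dimension \<open>d - 1\<close>.\<close>

text \<open>With the pointwise vector space structure on \<open>nat \<Rightarrow> real\<close>, the polytopes of
  \<open>polytope_Rk\<close> are exactly convex hulls, so the library facts about convex hulls apply.\<close>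

instantiation "fun" :: (type, real_vector) real_vector
begin

definition scaleR_fun :: "real \<Rightarrow> ('a \<Rightarrow> 'b) \<Rightarrow> 'a \<Rightarrow> 'b" where
  "scaleR_fun r f = (\<lambda>x. r *\<^sub>R f x)"

instance
  by standard (simp_all add: scaleR_fun_def fun_eq_iff scaleR_add_right scaleR_add_left)

end

lemma sum_fun_apply: "sum f A x = (\<Sum>a\<in>A. f a x)"
  by (induction A rule: infinite_finite_induct) auto

lemma polytope_Rk_iff:
  "polytope_Rk k Q \<longleftrightarrow> (\<exists>V. finite V \<and> V \<subseteq> Rk k \<and> Q = convex hull V)"
proof -
  have hull_eq: "convex hull V = {(\<lambda>j. \<Sum>v\<in>V. c v * v j) | c. (\<forall>v\<in>V. 0 \<le> c v) \<and> sum c V = 1}"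
    if "finite V" for V :: "(nat \<Rightarrow> real) set"
  proof -
    have "(\<Sum>v\<in>V. c v *\<^sub>R v) = (\<lambda>j. \<Sum>v\<in>V. c v * v j)" for c
      by (simp add: fun_eq_iff sum_fun_apply scaleR_fun_def)
    then show ?thesis
      unfolding convex_hull_finite[OF that] by auto
  qed
  show ?thesis
    unfolding polytope_Rk_def by (auto simp: hull_eq cong: conj_cong)
qed

lemma polytope_Rk_linear_image:
  assumes "polytope P" and "linear L" and "\<And>x. L x \<in> Rk k"
  shows "polytope_Rk k (L ` P)"
proof -
  obtain V where "finite V" and "P = convex hull V"
    using assms(1) unfolding polytope_def by blast
  then have "L ` P = convex hull (L ` V)"
    using convex_hull_linear_image[OF assms(2)] by simp
  with \<open>finite V\<close> assms(3) show ?thesis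
    unfolding polytope_Rk_iff by blast
qed

lemma msum_additive_image:
  fixes f :: "'a::comm_monoid_add \<Rightarrow> 'b::comm_monoid_add"
  assumes f0: "f 0 = 0" and f_add: "\<And>x y. f (x + y) = f x + f y"
  shows "msum (\<lambda>i. f ` P i) \<sigma> = f ` msum P \<sigma>"
proof (intro set_eqI iffI)
  fix z assume "z \<in> msum (\<lambda>i. f ` P i) \<sigma>"
  then obtain y where y: "\<forall>i\<in>\<sigma>. y i \<in> f ` P i" and z: "z = (\<Sum>i\<in>\<sigma>. y i)"
    unfolding msum_def by blast
  have preimages: "\<forall>i\<in>\<sigma>. \<exists>p. p \<in> P i \<and> y i = f p"
    using y by blast
  obtain x where x: "\<forall>i\<in>\<sigma>. x i \<in> P i \<and> y i = f (x i)"
    using bchoice[OF preimages] by blast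
  have "z = f (\<Sum>i\<in>\<sigma>. x i)"
    using z x sum_comp_morphism[of f x \<sigma>, OF f0 f_add] by (simp add: o_def)
  moreover have "(\<Sum>i\<in>\<sigma>. x i) \<in> msum P \<sigma>"
    using x unfolding msum_def by blast
  ultimately show "z \<in> f ` msum P \<sigma>" by blast
next
  fix z assume "z \<in> f ` msum P \<sigma>"
  then obtain x where x: "\<forall>i\<in>\<sigma>. x i \<in> P i" and z: "z = f (\<Sum>i\<in>\<sigma>. x i)"
    unfolding msum_def by blast
  then have "z = (\<Sum>i\<in>\<sigma>. f (x i))"
    using sum_comp_morphism[of f x \<sigma>, OF f0 f_add] by (simp add: o_def)
  with x show "z \<in> msum (\<lambda>i. f ` P i) \<sigma>"
    unfolding msum_def by blast
qed

lemma minkowski_complex_additive_image: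
  fixes f :: "'a::comm_monoid_add \<Rightarrow> 'b::comm_monoid_add"
  assumes "f 0 = 0" and "\<And>x y. f (x + y) = f x + f y"
    and separates: "\<And>\<sigma> y. \<sigma> \<in> minkowski_complex P \<mu> n \<Longrightarrow> y \<in> msum P \<sigma> \<Longrightarrow> f y \<noteq> f \<mu>"
  shows "minkowski_complex (\<lambda>i. f ` P i) (f \<mu>) n = minkowski_complex P \<mu> n"
proof (intro set_eqI iffI)
  fix \<sigma> assume \<sigma>: "\<sigma> \<in> minkowski_complex P \<mu> n"
  then have "f \<mu> \<notin> f ` msum P \<sigma>"
    using separates by force
  with \<sigma> show "\<sigma> \<in> minkowski_complex (\<lambda>i. f ` P i) (f \<mu>) n"
    by (simp add: minkowski_complex_def msum_additive_image[OF assms(1,2)])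
qed (auto simp: minkowski_complex_def msum_additive_image[OF assms(1,2)])

lemma orthogonal_to_hyperplane_imp_parallel:
  fixes v x :: "'a::real_inner"
  assumes "v \<noteq> 0" and "\<And>y. v \<bullet> y = 0 \<Longrightarrow> x \<bullet> y = 0"
  shows "\<exists>t. x = t *\<^sub>R v"
proof -
  define t where "t = (x \<bullet> v) / (v \<bullet> v)"
  define z where "z = x - t *\<^sub>R v"
  have "v \<bullet> z = 0"
    using assms(1) by (simp add: z_def t_def inner_diff_right inner_commute)
  moreover from this have "x \<bullet> z = 0"
    by (rule assms(2))
  ultimately have "z \<bullet> z = 0"
    by (simp add: z_def inner_diff_left inner_commute)
  then show ?thesis
    by (auto simp: z_def)
qed

lemma hyperplane_projection_exists:
  fixes v :: "'a::euclidean_space"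
  assumes "v \<noteq> 0"
  obtains L :: "'a \<Rightarrow> nat \<Rightarrow> real"
  where "linear L" and "\<And>x. L x \<in> Rk (DIM('a) - 1)" and "\<And>x. L x = 0 \<Longrightarrow> \<exists>t. x = t *\<^sub>R v"
proof -
  define m where "m = DIM('a) - 1"
  obtain B where "finite B" and B_hyperplane: "span B = {y. v \<bullet> y = 0}"
    and "card B = dim {y. v \<bullet> y = 0}"
    using basis_subspace_exists[OF subspace_hyperplane] by metis
  with assms have "card B = m"
    by (simp add: dim_hyperplane m_def)
  with \<open>finite B\<close> obtain b where b: "bij_betw b {1..m} B"
    using ex_bij_betw_nat_finite_1 by metis
  define L where "L x = (\<lambda>j. if j \<in> {1..m} then x \<bullet> b j else 0)" for x :: 'a
  have "linear L"
    by (rule linearI) (auto simp: L_def fun_eq_iff scaleR_fun_def inner_add_left)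
  moreover have "L x \<in> Rk m" for x
    by (simp add: L_def Rk_def)
  moreover have "\<exists>t. x = t *\<^sub>R v" if "L x = 0" for x
  proof (rule orthogonal_to_hyperplane_imp_parallel[OF assms])
    have "orthogonal x c" if "c \<in> B" for c
    proof -
      obtain j where "j \<in> {1..m}" and "c = b j"
        using b \<open>c \<in> B\<close> by (auto simp: bij_betw_def)
      with \<open>L x = 0\<close> show ?thesis
        by (auto simp: L_def orthogonal_def fun_eq_iff dest: spec[of _ j])
    qed
    then show "x \<bullet> y = 0" if "v \<bullet> y = 0" for y
      using orthogonal_to_span[of y B x] that B_hyperplane by (simp add: orthogonal_def)
  qed
  ultimately show ?thesis
    using that unfolding m_def by blast
qed

theorem lemma6:
  fixes P :: "nat \<Rightarrow> (real ^ 'd) set" and \<mu> :: "real ^ 'd" and n :: nat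
  assumes "\<forall>i\<in>{1..n}. polytope (P i) \<and> 0 \<in> P i"
    and "\<exists>v. v \<noteq> 0 \<and> (\<forall>\<sigma>\<in>minkowski_complex P \<mu> n.
            {\<mu> + t *\<^sub>R v | t. True} \<inter> msum P \<sigma> = {})"
  shows "ctd (minkowski_complex P \<mu> n) n < CARD('d)"
proof -
  obtain v :: "real ^ 'd" where "v \<noteq> 0" and line_misses:
    "\<And>\<sigma>. \<sigma> \<in> minkowski_complex P \<mu> n \<Longrightarrow> {\<mu> + t *\<^sub>R v | t. True} \<inter> msum P \<sigma> = {}"
    using assms(2) by blast
  then obtain L :: "real ^ 'd \<Rightarrow> nat \<Rightarrow> real" where L: "linear L"
    and L_Rk: "\<And>x. L x \<in> Rk (CARD('d) - 1)" and L_kernel: "\<And>x. L x = 0 \<Longrightarrow> \<exists>t. x = t *\<^sub>R v"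
    using hyperplane_projection_exists by (metis DIM_cart DIM_real mult_1_right)
  have "L y \<noteq> L \<mu>" if "\<sigma> \<in> minkowski_complex P \<mu> n" and "y \<in> msum P \<sigma>" for \<sigma> y
  proof
    assume "L y = L \<mu>"
    then obtain t where "y - \<mu> = t *\<^sub>R v"
      using L_kernel[of "y - \<mu>"] linear_diff[OF L] by auto
    then have "y \<in> {\<mu> + t *\<^sub>R v | t. True}"
      by (auto simp: algebra_simps)
    with line_misses[OF that(1)] \<open>y \<in> msum P \<sigma>\<close> show False
      by blast
  qed
  then have "minkowski_complex (\<lambda>i. L ` P i) (L \<mu>) n = minkowski_complex P \<mu> n"
    using minkowski_complex_additive_image linear_0[OF L] linear_add[OF L] by metis
  moreover have "polytope_Rk (CARD('d) - 1) (L ` P i) \<and> 0 \<in> L ` P i" if "i \<in> {1..n}" for i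
    using assms(1) that polytope_Rk_linear_image[OF _ L L_Rk] linear_0[OF L] by force
  ultimately have "realizable_in (minkowski_complex P \<mu> n) n (CARD('d) - 1)"
    unfolding realizable_in_def using L_Rk by metis
  then have "ctd (minkowski_complex P \<mu> n) n \<le> CARD('d) - 1"
    unfolding ctd_def by (rule Least_le)
  then show ?thesis
    using zero_less_card_finite[where 'a='d] by linarith
qed

end
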